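(* Let $n\in\mathbb{N}$ and $0<\beta\le n$. Then there exists a constant $C_\beta>0$ depending only on $\beta$ such that for all functions $f,g$ on $\mathbb{R}^n$: (i) $\|f+g\|_{\operatorname{BMO}^\beta(\mathbb{R}^n)}\le2(\|f\|_{\operatorname{BMO}^\beta(\mathbb{R}^n)}+\|g\|_{\operatorname{BMO}^\beta(\mathbb{R}^n)})$; (ii) $\|\lambda f\|_{\operatorname{BMO}^\beta(\mathbb{R}^n)}=|\lambda|\|f\|_{\operatorname{BMO}^\beta(\mathbb{R}^n)}$ for every $\lambda\in\mathbb{R}$; (iii) $\||f|\|_{\operatorname{BMO}^\beta(\mathbb{R}^n)}\le C_\beta\|f\|_{\operatorname{BMO}^\beta(\mathbb{R}^n)}$; (iv) $\|\max(f,g)\|_{\operatorname{BMO}^\beta(\mathbb{R}^n)}\le C_\beta(\|f\|_{\operatorname{BMO}^\beta(\mathbb{R}^n)}+\|g\|_{\operatorname{BMO}^\beta(\mathbb{R}^n)})$; (v) $\|\min(f,g)\|_{\operatorname{BMO}^\beta(\mathbb{R}^n)}\le C_\beta(\|f\|_{\operatorname{BMO}^\beta(\mathbb{R}^n)}+\|g\|_{\operatorname{BMO}^\beta(\mathbb{R}^n)})$.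
   Context: $\mathcal{H}^\beta_\infty(E)=\inf\{\sum_i\omega_\beta r_i^\beta:E\subset\bigcup_iB(x_i,r_i)\}$, $\omega_\beta=\pi^{\beta/2}/\Gamma(\beta/2+1)$; integrals against $\mathcal{H}^\beta_\infty$ are Choquet integrals $\int_\Omega h\,d\mathcal{H}^\beta_\infty=\int_0^\infty\mathcal{H}^\beta_\infty(\{x\in\Omega:h>t\})\,dt$. Cubes are axis-parallel with side length $\ell(Q)$. $\|f\|_{\operatorname{BMO}^\beta(\mathbb{R}^n)}=\sup_Q\inf_{c\in\mathbb{R}}\ell(Q)^{-\beta}\int_Q|f-c|\,d\mathcal{H}^\beta_\infty$. *)

theory Defs
  imports "HOL-Analysis.Analysis"
begin

text \<open>Points of R^n are represented as functions nat => real vanishing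
  outside {..<n}, so that the dimension n is an ordinary natural-number
  parameter (needed because the constant must not depend on n).\<close>

definition Rn :: "nat \<Rightarrow> (nat \<Rightarrow> real) set" where
  "Rn n = {x. \<forall>i\<ge>n. x i = 0}"

definition edist :: "nat \<Rightarrow> (nat \<Rightarrow> real) \<Rightarrow> (nat \<Rightarrow> real) \<Rightarrow> real" where
  "edist n x y = sqrt (\<Sum>i<n. (x i - y i)^2)"

definition ballN :: "nat \<Rightarrow> (nat \<Rightarrow> real) \<Rightarrow> real \<Rightarrow> (nat \<Rightarrow> real) set" where
  "ballN n x r = {y \<in> Rn n. edist n x y < r}"

definition omega :: "real \<Rightarrow> real" where
  "omega \<beta> = pi powr (\<beta> / 2) / Gamma (\<beta> / 2 + 1)"

definition hcontent :: "nat \<Rightarrow> real \<Rightarrow> (nat \<Rightarrow> real) set \<Rightarrow> ennreal" where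
  "hcontent n \<beta> E = (INF p \<in> {(c, r). (\<forall>i. c i \<in> Rn n \<and> 0 \<le> r i) \<and>
        E \<subseteq> (\<Union>i. ballN n (c i) (r i))}.
      (\<Sum>i. ennreal (omega \<beta> * (snd p i) powr \<beta>)))"

definition choquet :: "nat \<Rightarrow> real \<Rightarrow> (nat \<Rightarrow> real) set \<Rightarrow> ((nat \<Rightarrow> real) \<Rightarrow> real) \<Rightarrow> ennreal" where
  "choquet n \<beta> \<Omega> h = (\<integral>\<^sup>+ t. indicator {0..} t * hcontent n \<beta> {x \<in> \<Omega>. h x > t} \<partial>lborel)"

definition cubeN :: "nat \<Rightarrow> (nat \<Rightarrow> real) \<Rightarrow> real \<Rightarrow> (nat \<Rightarrow> real) set" where
  "cubeN n a l = {x \<in> Rn n. \<forall>i<n. a i \<le> x i \<and> x i \<le> a i + l}"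

definition bmo :: "nat \<Rightarrow> real \<Rightarrow> ((nat \<Rightarrow> real) \<Rightarrow> real) \<Rightarrow> ennreal" where
  "bmo n \<beta> f = (SUP q \<in> {(a, l). a \<in> Rn n \<and> 0 < l}.
      (INF c :: real. ennreal (snd q powr (-\<beta>)) *
         choquet n \<beta> (cubeN n (fst q) (snd q)) (\<lambda>x. \<bar>f x - c\<bar>)))"

end

theory Submission
  imports Defs
begin

text \<open>Hausdorff content is monotone and finitely subadditive. Hence the
  Choquet integral is monotone, positively homogeneous (substitute \<open>t = c s\<close> in the layer-cake
  integral), and subadditive up to the factor 2, because
  \<open>{h\<^sub>1 + h\<^sub>2 > t} \<subseteq> {2 h\<^sub>1 > t} \<union> {2 h\<^sub>2 > t}\<close>.
  On every cube, \<open>f + g\<close>, \<open>max f g\<close> and \<open>min f g\<close> differ from the corresponding combination of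
  two constants \<open>c\<^sub>1, c\<^sub>2\<close> by at most \<open>|f - c\<^sub>1| + |g - c\<^sub>2|\<close>, and \<open>|f|\<close> differs from \<open>|c|\<close> by at
  most \<open>|f - c|\<close>. So \<open>C\<^sub>\<beta> = 2\<close> works, for every \<open>n\<close> and \<open>\<beta>\<close>.\<close>

lemma INF_ennreal_add_const_set:
  fixes f :: "'a \<Rightarrow> ennreal"
  shows "(INF i\<in>I. f i + c) = (INF i\<in>I. f i) + c"
proof (cases "I = {}")
  case False
  then show ?thesis
    using continuous_at_Inf_mono[of "\<lambda>x. x + c" "f ` I"]
    using continuous_add[of "at_right (Inf (f ` I))", of "\<lambda>x. x" "\<lambda>x. c"]
    by (auto simp: mono_def image_comp)
qed simp

lemma ennreal_le_INF_add_INF: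
  fixes X :: ennreal
  assumes "\<And>i j. i \<in> I \<Longrightarrow> j \<in> J \<Longrightarrow> X \<le> f i + g j"
  shows "X \<le> (INF i\<in>I. f i) + (INF j\<in>J. g j)"
proof -
  have "X \<le> (INF i\<in>I. f i + (INF j\<in>J. g j))"
  proof (rule INF_greatest)
    fix i assume "i \<in> I"
    then have "X \<le> (INF j\<in>J. g j + f i)"
      using assms by (auto intro!: INF_greatest simp: add.commute)
    also have "\<dots> = (INF j\<in>J. g j) + f i"
      by (rule INF_ennreal_add_const_set)
    finally show "X \<le> f i + (INF j\<in>J. g j)"
      by (simp add: add.commute)
  qed
  then show ?thesis
    by (simp add: INF_ennreal_add_const_set)
qed

lemma ennreal_mult_INF:
  fixes f :: "'a \<Rightarrow> ennreal"
  assumes "0 < k"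
  shows "ennreal k * (INF i\<in>I. f i) = (INF i\<in>I. ennreal k * f i)"
proof (cases "I = {}")
  case True
  then show ?thesis using assms by (simp add: ennreal_mult_top)
next
  case False
  have "continuous_on UNIV (\<lambda>x. ennreal k * x)"
    by (intro ennreal_continuous_on_cmult continuous_on_id) simp
  then have "continuous (at_right (Inf (f ` I))) (\<lambda>x. ennreal k * x)"
    by (simp add: continuous_on_eq_continuous_at continuous_at_imp_continuous_at_within)
  then show ?thesis
    using continuous_at_Inf_mono[of "\<lambda>x. ennreal k * x" "f ` I"] False
    by (auto simp: mono_def mult_left_mono image_comp)
qed

lemma suminf_interleave_ennreal:
  fixes a b :: "nat \<Rightarrow> ennreal"
  shows "(\<Sum>i. if even i then a (i div 2) else b (i div 2)) = (\<Sum>i. a i) + (\<Sum>i. b i)"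
proof -
  let ?F = "\<lambda>i. if even i then a (i div 2) else b (i div 2)"
  have "(\<lambda>k. sum ?F {k * 2 ..< k * 2 + 2}) sums (\<Sum>i. ?F i)"
    by (rule sums_group[OF summable_sums[OF summableI]]) simp
  moreover have "sum ?F {k * 2 ..< k * 2 + 2} = a k + b k" for k
  proof -
    have "{k * 2 ..< k * 2 + 2} = {2 * k, 2 * k + 1}" by auto
    then show ?thesis by simp
  qed
  ultimately show ?thesis
    by (simp add: sums_iff suminf_add)
qed

lemma borel_measurable_antimono_ennreal:
  fixes G :: "real \<Rightarrow> ennreal"
  assumes "\<And>s t. s \<le> t \<Longrightarrow> G t \<le> G s"
  shows "G \<in> borel_measurable borel"
proof (rule borel_measurableI_greater)
  fix y
  have "is_interval {x. y < G x}"
    unfolding is_interval_1 using assms by (blast intro: less_le_trans)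
  then show "{x \<in> space borel. y < G x} \<in> sets borel"
    by (simp add: real_interval_borel_measurable)
qed

lemma hcontent_mono:
  assumes "A \<subseteq> B"
  shows "hcontent n \<beta> A \<le> hcontent n \<beta> B"
  unfolding hcontent_def by (rule INF_superset_mono) (use assms in auto)

lemma hcontent_empty: "hcontent n \<beta> {} = 0"
proof -
  have "hcontent n \<beta> {} \<le> 0"
    unfolding hcontent_def
    by (rule INF_lower2[of "(\<lambda>i j. 0, \<lambda>i. 0)"]) (auto simp: Rn_def)
  then show ?thesis by simp
qed

lemma hcontent_Un: "hcontent n \<beta> (A \<union> B) \<le> hcontent n \<beta> A + hcontent n \<beta> B"
  unfolding hcontent_def
proof (rule ennreal_le_INF_add_INF, clarify)
  fix c c' :: "nat \<Rightarrow> nat \<Rightarrow> real" and r r' :: "nat \<Rightarrow> real"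
  assume cover: "\<forall>i. c i \<in> Rn n \<and> 0 \<le> r i" "A \<subseteq> (\<Union>i. ballN n (c i) (r i))"
    and cover': "\<forall>i. c' i \<in> Rn n \<and> 0 \<le> r' i" "B \<subseteq> (\<Union>i. ballN n (c' i) (r' i))"
  let ?mix = "\<lambda>u v i. if even i then u (i div 2) else v (i div 2)"
  let ?covers = "\<lambda>E. {(c, r). (\<forall>i. c i \<in> Rn n \<and> 0 \<le> r i) \<and> E \<subseteq> (\<Union>i. ballN n (c i) (r i))}"
  let ?cost = "\<lambda>r. \<Sum>i. ennreal (omega \<beta> * r i powr \<beta>)"
  have "A \<union> B \<subseteq> (\<Union>i. ballN n (?mix c c' i) (?mix r r' i))"
  proof
    fix x assume "x \<in> A \<union> B"
    then consider k where "x \<in> ballN n (?mix c c' (2 * k)) (?mix r r' (2 * k))"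
      | k where "x \<in> ballN n (?mix c c' (2 * k + 1)) (?mix r r' (2 * k + 1))"
      using cover(2) cover'(2) by auto
    then show "x \<in> (\<Union>i. ballN n (?mix c c' i) (?mix r r' i))"
      by cases blast+
  qed
  with cover(1) cover'(1)
  have "(INF p\<in>?covers (A \<union> B). ?cost (snd p)) \<le> ?cost (?mix r r')"
    by (intro INF_lower2[of "(?mix c c', ?mix r r')"]) auto
  also have "\<dots> = (\<Sum>i. ?mix (\<lambda>i. ennreal (omega \<beta> * r i powr \<beta>))
                         (\<lambda>i. ennreal (omega \<beta> * r' i powr \<beta>)) i)"
    by (rule arg_cong[where f = suminf]) (simp add: fun_eq_iff)
  also have "\<dots> = ?cost r + ?cost r'"
    by (rule suminf_interleave_ennreal)
  finally show "(INF p\<in>?covers (A \<union> B). ?cost (snd p)) \<le> ?cost (snd (c, r)) + ?cost (snd (c', r'))"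
    by simp
qed

lemma choquet_integrand_measurable:
  "(\<lambda>t::real. indicator {0..} t * hcontent n \<beta> {x\<in>Q. h x > t} :: ennreal) \<in> borel_measurable borel"
proof -
  have "(\<lambda>t::real. hcontent n \<beta> {x\<in>Q. h x > t}) \<in> borel_measurable borel"
    by (rule borel_measurable_antimono_ennreal) (auto intro: hcontent_mono)
  then show ?thesis by measurable
qed

lemma choquet_mono:
  assumes "\<And>x. x \<in> Q \<Longrightarrow> h\<^sub>1 x \<le> h\<^sub>2 x"
  shows "choquet n \<beta> Q h\<^sub>1 \<le> choquet n \<beta> Q h\<^sub>2"
  unfolding choquet_def
  by (intro nn_integral_mono mult_left_mono hcontent_mono) (use assms in \<open>auto intro: less_le_trans\<close>)

lemma choquet_zero: "choquet n \<beta> Q (\<lambda>x. 0) = 0"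
proof -
  have "(\<lambda>t::real. indicator {0..} t * hcontent n \<beta> {x\<in>Q. 0 > t}) = (\<lambda>t. 0 :: ennreal)"
    by (auto simp: indicator_def hcontent_empty fun_eq_iff)
  then show ?thesis
    unfolding choquet_def by simp
qed

lemma choquet_cmult:
  assumes "0 < c"
  shows "choquet n \<beta> Q (\<lambda>x. c * h x) = ennreal c * choquet n \<beta> Q h"
proof -
  define F where "F = (\<lambda>t. indicator {0..} t * hcontent n \<beta> {x\<in>Q. h x > t} :: ennreal)"
  have "F \<in> borel_measurable borel"
    unfolding F_def by (rule choquet_integrand_measurable)
  then have F_scaled_measurable: "(\<lambda>t. F (t / c)) \<in> borel_measurable borel"
    by measurable
  have "{x\<in>Q. c * h x > t} = {x\<in>Q. h x > t / c}" for t
    using assms by (auto simp: pos_divide_less_eq mult.commute)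
  moreover have "(indicator {0..} t :: ennreal) = indicator {0..} (t / c)" for t
    using assms by (auto simp: indicator_def zero_le_divide_iff)
  ultimately have "choquet n \<beta> Q (\<lambda>x. c * h x) = (\<integral>\<^sup>+ t. F (t / c) \<partial>lborel)"
    by (simp add: choquet_def F_def)
  also have "\<dots> = ennreal \<bar>c\<bar> * (\<integral>\<^sup>+ s. F ((0 + c * s) / c) \<partial>lborel)"
    by (rule nn_integral_real_affine[OF F_scaled_measurable]) (use assms in simp)
  also have "\<dots> = ennreal c * choquet n \<beta> Q h"
    using assms by (simp add: choquet_def F_def)
  finally show ?thesis .
qed

lemma choquet_le_2_add:
  assumes "\<And>x. x \<in> Q \<Longrightarrow> h x \<le> h\<^sub>1 x + h\<^sub>2 x"
  shows "choquet n \<beta> Q h \<le> 2 * (choquet n \<beta> Q h\<^sub>1 + choquet n \<beta> Q h\<^sub>2)"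
proof -
  have "choquet n \<beta> Q h \<le> (\<integral>\<^sup>+ t. indicator {0..} t * hcontent n \<beta> {x\<in>Q. 2 * h\<^sub>1 x > t}
        + indicator {0..} t * hcontent n \<beta> {x\<in>Q. 2 * h\<^sub>2 x > t} \<partial>lborel)"
    unfolding choquet_def
  proof (intro nn_integral_mono)
    fix t :: real
    have "{x\<in>Q. h x > t} \<subseteq> {x\<in>Q. 2 * h\<^sub>1 x > t} \<union> {x\<in>Q. 2 * h\<^sub>2 x > t}"
      using assms by force
    then have "hcontent n \<beta> {x\<in>Q. h x > t}
        \<le> hcontent n \<beta> {x\<in>Q. 2 * h\<^sub>1 x > t} + hcontent n \<beta> {x\<in>Q. 2 * h\<^sub>2 x > t}"
      by (meson hcontent_mono hcontent_Un order_trans)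
    then show "indicator {0..} t * hcontent n \<beta> {x\<in>Q. h x > t}
        \<le> indicator {0..} t * hcontent n \<beta> {x\<in>Q. 2 * h\<^sub>1 x > t}
          + indicator {0..} t * hcontent n \<beta> {x\<in>Q. 2 * h\<^sub>2 x > t}"
      by (simp add: distrib_left[symmetric] mult_left_mono)
  qed
  also have "\<dots> = choquet n \<beta> Q (\<lambda>x. 2 * h\<^sub>1 x) + choquet n \<beta> Q (\<lambda>x. 2 * h\<^sub>2 x)"
    unfolding choquet_def by (rule nn_integral_add) (auto intro: choquet_integrand_measurable)
  also have "\<dots> = 2 * (choquet n \<beta> Q h\<^sub>1 + choquet n \<beta> Q h\<^sub>2)"
    by (simp add: choquet_cmult[where c = 2, simplified] distrib_left)
  finally show ?thesis .
qed

definition choquet_osc ::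
    "nat \<Rightarrow> real \<Rightarrow> (nat \<Rightarrow> real) set \<Rightarrow> ((nat \<Rightarrow> real) \<Rightarrow> real) \<Rightarrow> ennreal" where
  "choquet_osc n \<beta> Q f = (INF c::real. choquet n \<beta> Q (\<lambda>x. \<bar>f x - c\<bar>))"

lemma bmo_eq_SUP_choquet_osc:
  "bmo n \<beta> f = (SUP q\<in>{(a, l). a \<in> Rn n \<and> 0 < l}.
      ennreal (snd q powr - \<beta>) * choquet_osc n \<beta> (cubeN n (fst q) (snd q)) f)"
  unfolding bmo_def choquet_osc_def
  by (intro SUP_cong) (auto simp: ennreal_mult_INF)

lemma choquet_osc_comp_contraction:
  assumes "\<And>s t. \<bar>\<phi> s - \<phi> t\<bar> \<le> \<bar>s - t\<bar>"
  shows "choquet_osc n \<beta> Q (\<lambda>x. \<phi> (f x)) \<le> choquet_osc n \<beta> Q f"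
  unfolding choquet_osc_def
proof (rule INF_greatest)
  fix c :: real
  show "(INF d. choquet n \<beta> Q (\<lambda>x. \<bar>\<phi> (f x) - d\<bar>)) \<le> choquet n \<beta> Q (\<lambda>x. \<bar>f x - c\<bar>)"
    by (rule INF_lower2[of "\<phi> c"]) (auto intro: choquet_mono assms)
qed

lemma choquet_osc_cmult:
  "choquet_osc n \<beta> Q (\<lambda>x. a * f x) = ennreal \<bar>a\<bar> * choquet_osc n \<beta> Q f"
proof (cases "a = 0")
  case True
  have "choquet_osc n \<beta> Q (\<lambda>x. 0) \<le> 0"
    unfolding choquet_osc_def by (rule INF_lower2[of 0]) (simp_all add: choquet_zero)
  then show ?thesis
    using True by simp
next
  case False
  define G where "G d = choquet n \<beta> Q (\<lambda>x. \<bar>f x - d\<bar>)" for d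
  have "choquet n \<beta> Q (\<lambda>x. \<bar>a * f x - c\<bar>) = ennreal \<bar>a\<bar> * G (c / a)" for c
  proof -
    have "(\<lambda>x. \<bar>a * f x - c\<bar>) = (\<lambda>x. \<bar>a\<bar> * \<bar>f x - c / a\<bar>)"
      using False by (auto simp: fun_eq_iff abs_mult[symmetric] right_diff_distrib)
    then show ?thesis
      using False by (simp add: G_def choquet_cmult)
  qed
  then have "choquet_osc n \<beta> Q (\<lambda>x. a * f x) = (INF c. ennreal \<bar>a\<bar> * G (c / a))"
    by (simp add: choquet_osc_def)
  also have "\<dots> = (INF d\<in>range (\<lambda>c. c / a). ennreal \<bar>a\<bar> * G d)"
    by (simp add: image_image)
  also have "\<dots> = (INF d. ennreal \<bar>a\<bar> * G d)"
    using False by (metis surj_def nonzero_mult_div_cancel_right)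
  also have "\<dots> = ennreal \<bar>a\<bar> * choquet_osc n \<beta> Q f"
    using False by (simp add: ennreal_mult_INF G_def choquet_osc_def)
  finally show ?thesis .
qed

lemma choquet_osc_le_2_add:
  assumes "\<And>x c\<^sub>1 c\<^sub>2. \<bar>h x - \<phi> c\<^sub>1 c\<^sub>2\<bar> \<le> \<bar>f x - c\<^sub>1\<bar> + \<bar>g x - c\<^sub>2\<bar>"
  shows "choquet_osc n \<beta> Q h \<le> 2 * (choquet_osc n \<beta> Q f + choquet_osc n \<beta> Q g)"
proof -
  have "choquet_osc n \<beta> Q h \<le> (INF c\<^sub>1. 2 * choquet n \<beta> Q (\<lambda>x. \<bar>f x - c\<^sub>1\<bar>))
      + (INF c\<^sub>2. 2 * choquet n \<beta> Q (\<lambda>x. \<bar>g x - c\<^sub>2\<bar>))"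
  proof (rule ennreal_le_INF_add_INF)
    fix c\<^sub>1 c\<^sub>2 :: real
    have "choquet_osc n \<beta> Q h \<le> choquet n \<beta> Q (\<lambda>x. \<bar>h x - \<phi> c\<^sub>1 c\<^sub>2\<bar>)"
      unfolding choquet_osc_def by (rule INF_lower) simp
    also have "\<dots> \<le> 2 * (choquet n \<beta> Q (\<lambda>x. \<bar>f x - c\<^sub>1\<bar>) + choquet n \<beta> Q (\<lambda>x. \<bar>g x - c\<^sub>2\<bar>))"
      by (rule choquet_le_2_add) (rule assms)
    finally show "choquet_osc n \<beta> Q h \<le> 2 * choquet n \<beta> Q (\<lambda>x. \<bar>f x - c\<^sub>1\<bar>)
        + 2 * choquet n \<beta> Q (\<lambda>x. \<bar>g x - c\<^sub>2\<bar>)"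
      by (simp add: distrib_left)
  qed
  also have "\<dots> = 2 * (choquet_osc n \<beta> Q f + choquet_osc n \<beta> Q g)"
    by (simp add: choquet_osc_def distrib_left ennreal_mult_INF[of 2, simplified])
  finally show ?thesis .
qed

lemma bmo_comp_contraction:
  assumes "\<And>s t. \<bar>\<phi> s - \<phi> t\<bar> \<le> \<bar>s - t\<bar>"
  shows "bmo n \<beta> (\<lambda>x. \<phi> (f x)) \<le> bmo n \<beta> f"
  unfolding bmo_eq_SUP_choquet_osc
  by (intro SUP_mono' mult_left_mono choquet_osc_comp_contraction assms) simp

lemma bmo_cmult: "bmo n \<beta> (\<lambda>x. a * f x) = ennreal \<bar>a\<bar> * bmo n \<beta> f"
  by (simp add: bmo_eq_SUP_choquet_osc choquet_osc_cmult SUP_mult_left_ennreal mult.left_commute)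

lemma bmo_le_2_add:
  assumes "\<And>x c\<^sub>1 c\<^sub>2. \<bar>h x - \<phi> c\<^sub>1 c\<^sub>2\<bar> \<le> \<bar>f x - c\<^sub>1\<bar> + \<bar>g x - c\<^sub>2\<bar>"
  shows "bmo n \<beta> h \<le> 2 * (bmo n \<beta> f + bmo n \<beta> g)"
  unfolding bmo_eq_SUP_choquet_osc[of n \<beta> h]
proof (rule SUP_least)
  fix q :: "(nat \<Rightarrow> real) \<times> real"
  assume q: "q \<in> {(a, l). a \<in> Rn n \<and> 0 < l}"
  let ?w = "ennreal (snd q powr - \<beta>)" and ?Q = "cubeN n (fst q) (snd q)"
  have "?w * choquet_osc n \<beta> ?Q h \<le> ?w * (2 * (choquet_osc n \<beta> ?Q f + choquet_osc n \<beta> ?Q g))"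
    by (intro mult_left_mono choquet_osc_le_2_add[OF assms]) simp
  also have "\<dots> = 2 * (?w * choquet_osc n \<beta> ?Q f + ?w * choquet_osc n \<beta> ?Q g)"
    by (simp add: algebra_simps)
  also have "\<dots> \<le> 2 * (bmo n \<beta> f + bmo n \<beta> g)"
    unfolding bmo_eq_SUP_choquet_osc using q by (intro mult_left_mono add_mono SUP_upper) auto
  finally show "?w * choquet_osc n \<beta> ?Q h \<le> 2 * (bmo n \<beta> f + bmo n \<beta> g)" .
qed

theorem lemma2p10:
  fixes \<beta> :: real
  assumes "0 < \<beta>"
  shows "\<exists>C>0. \<forall>(n::nat) f g. \<beta> \<le> real n \<longrightarrow>
     bmo n \<beta> (\<lambda>x. f x + g x) \<le> 2 * (bmo n \<beta> f + bmo n \<beta> g)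
   \<and> (\<forall>lam::real. bmo n \<beta> (\<lambda>x. lam * f x) = ennreal \<bar>lam\<bar> * bmo n \<beta> f)
   \<and> bmo n \<beta> (\<lambda>x. \<bar>f x\<bar>) \<le> ennreal C * bmo n \<beta> f
   \<and> bmo n \<beta> (\<lambda>x. max (f x) (g x)) \<le> ennreal C * (bmo n \<beta> f + bmo n \<beta> g)
   \<and> bmo n \<beta> (\<lambda>x. min (f x) (g x)) \<le> ennreal C * (bmo n \<beta> f + bmo n \<beta> g)"
proof -
  have add: "bmo n \<beta> (\<lambda>x. f x + g x) \<le> 2 * (bmo n \<beta> f + bmo n \<beta> g)" for n f g
    by (rule bmo_le_2_add[where \<phi> = "(+)"]) linarith
  have max: "bmo n \<beta> (\<lambda>x. max (f x) (g x)) \<le> 2 * (bmo n \<beta> f + bmo n \<beta> g)" for n f g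
    by (rule bmo_le_2_add[where \<phi> = max]) linarith
  have min: "bmo n \<beta> (\<lambda>x. min (f x) (g x)) \<le> 2 * (bmo n \<beta> f + bmo n \<beta> g)" for n f g
    by (rule bmo_le_2_add[where \<phi> = min]) linarith
  have abs: "bmo n \<beta> (\<lambda>x. \<bar>f x\<bar>) \<le> 2 * bmo n \<beta> f" for n f
  proof -
    have "bmo n \<beta> (\<lambda>x. \<bar>f x\<bar>) \<le> bmo n \<beta> f"
      by (rule bmo_comp_contraction) linarith
    also have "\<dots> \<le> 2 * bmo n \<beta> f"
      by (simp add: mult_2 add_increasing)
    finally show ?thesis .
  qed
  show ?thesis
    by (intro exI[of _ 2] conjI allI impI)
      (simp_all only: ennreal_numeral zero_less_numeral add max min abs bmo_cmult)
qed

end
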